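(* Under Assumption 1, let $(x^k)_{k\in\mathbb{N}}$ be generated by PPGA. Then: (i) there exists $a>0$ such that $F(x^{k+1})+\frac a2\|x^{k+1}-x^k\|_2^2\le F(x^k)$ for all $k\in\mathbb{N}$; (ii) there exist $b>0$ and $w^{k+1}\in\partial F(x^{k+1})$ such that $\|w^{k+1}\|_2\le b\|x^{k+1}-x^k\|_2$ for all $k\in\mathbb{N}$.
   Context: Let $f:\mathbb{R}^n\to(-\infty,+\infty]$ be proper lsc, $g,h:\mathbb{R}^n\to\mathbb{R}$, $\Omega:=\{x:g(x)\ne0\}$, $F(x):=\frac{f(x)+h(x)}{g(x)}$ on $\Omega\cap\mathrm{dom}(f)$ and $+\infty$ otherwise. Assumption 1: (i) $f$ locally Lipschitz on $\mathrm{dom}(f)\cap\Omega$; (ii) $g$ locally Lipschitz continuously differentiable and positive on $\Omega\cap\mathrm{dom}(f)$; (iii) $\nabla h$ is $L$-Lipschitz, $L>0$; (iv) $f+h\ge0$ on $\mathrm{dom}(f)$, $\Omega\cap\mathrm{dom}(f)\ne\emptyset$; (v) $\mathrm{prox}_{f-\gamma g}(x)\ne\emptyset$ for all $x$, $\gamma\ge0$; (vi) $F$ lsc and level bounded. $\mathrm{prox}_\varphi(x):=\arg\min_u\{\varphi(u)+\frac12\|u-x\|_2^2\}$. Fréchet subdifferential: $\hat\partial\varphi(x):=\{v:\liminf_{z\to x,z\ne x}\frac{\varphi(z)-\varphi(x)-\langle v,z-x\rangle}{\|z-x\|_2}\ge0\}$. Limiting subdifferential: $\partial\varphi(x):=\{v:\exists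 x^k\to x,\ \varphi(x^k)\to\varphi(x),\ v^k\in\hat\partial\varphi(x^k),\ v^k\to v\}$. PPGA: choose $x^0\in\Omega\cap\mathrm{dom}(f)$ and $0<\underline\alpha\le\alpha_k\le\overline\alpha<1/L$; for $k=0,1,\dots$ set $C_k:=F(x^k)$ and pick any $x^{k+1}\in\mathrm{prox}_{\alpha_k(f-C_kg)}(x^k-\alpha_k\nabla h(x^k))$. *)

theory Defs
  imports "HOL-Analysis.Analysis"
begin

definition edom :: "('a \<Rightarrow> ereal) \<Rightarrow> 'a set" where
  "edom \<phi> = {x. \<phi> x < \<infinity>}"

definition proper_fun :: "('a \<Rightarrow> ereal) \<Rightarrow> bool" where
  "proper_fun \<phi> \<longleftrightarrow> (\<forall>x. \<phi> x \<noteq> -\<infinity>) \<and> (\<exists>x. \<phi> x \<noteq> \<infinity>)"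

definition lsc_fun :: "('a::topological_space \<Rightarrow> ereal) \<Rightarrow> bool" where
  "lsc_fun \<phi> \<longleftrightarrow> (\<forall>x. \<phi> x \<le> Liminf (at x) \<phi>)"

definition level_bounded :: "('a::metric_space \<Rightarrow> ereal) \<Rightarrow> bool" where
  "level_bounded \<phi> \<longleftrightarrow> (\<forall>c::real. bounded {x. \<phi> x \<le> ereal c})"

definition loc_lipschitz_on :: "'a::metric_space set \<Rightarrow> ('a \<Rightarrow> 'b::real_normed_vector) \<Rightarrow> bool" where
  "loc_lipschitz_on S \<phi> \<longleftrightarrow>
     (\<forall>x\<in>S. \<exists>\<delta>>0. \<exists>K. \<forall>y\<in>ball x \<delta> \<inter> S. \<forall>z\<in>ball x \<delta> \<inter> S.
        dist (\<phi> y) (\<phi> z) \<le> K * dist y z)"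

definition prox :: "('a::real_normed_vector \<Rightarrow> ereal) \<Rightarrow> 'a \<Rightarrow> 'a set" where
  "prox \<phi> x = {u. \<forall>v. \<phi> u + ereal ((norm (u - x))\<^sup>2 / 2) \<le> \<phi> v + ereal ((norm (v - x))\<^sup>2 / 2)}"

definition frac_obj :: "('a \<Rightarrow> ereal) \<Rightarrow> ('a \<Rightarrow> real) \<Rightarrow> ('a \<Rightarrow> real) \<Rightarrow> 'a \<Rightarrow> ereal" where
  "frac_obj f g h x =
     (if g x \<noteq> 0 \<and> f x < \<infinity> then ereal ((real_of_ereal (f x) + h x) / g x) else \<infinity>)"

definition frechet_subdiff :: "('a::real_inner \<Rightarrow> ereal) \<Rightarrow> 'a \<Rightarrow> 'a set" where
  "frechet_subdiff \<phi> x = {v. \<bar>\<phi> x\<bar> \<noteq> \<infinity> \<and>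
      Liminf (at x) (\<lambda>z. (\<phi> z - \<phi> x - ereal (inner v (z - x))) / ereal (norm (z - x))) \<ge> 0}"

definition limiting_subdiff :: "('a::real_inner \<Rightarrow> ereal) \<Rightarrow> 'a \<Rightarrow> 'a set" where
  "limiting_subdiff \<phi> x = {v. \<exists>xs vs. xs \<longlonglongrightarrow> x \<and> (\<lambda>k. \<phi> (xs k)) \<longlonglongrightarrow> \<phi> x \<and>
      (\<forall>k. vs k \<in> frechet_subdiff \<phi> (xs k)) \<and> vs \<longlonglongrightarrow> v}"

end

theory Submission
  imports Defs
begin

text \<open>
  With \<open>C = F(x\<^sup>k)\<close>, the surrogate \<open>f - C g + h\<close> vanishes at \<open>x\<^sup>k\<close>. The proximal inequality
  together with the descent lemma for \<open>h\<close> shows that one step decreases it by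
  \<open>c |x\<^sup>k\<^sup>+\<^sup>1 - x\<^sup>k|\<^sup>2\<close> with \<open>c = (1/\<alpha>_up - L)/2 > 0\<close>; dividing by \<open>g(x\<^sup>k\<^sup>+\<^sup>1)\<close> gives (i), with \<open>a\<close>
  determined by the maximum of \<open>g\<close> on the compact sublevel set \<open>{F \<le> F(x\<^sup>0)}\<close>, which contains
  all iterates. For (ii), optimality of the proximal step yields a quadratic lower model of
  \<open>f - C g\<close> at \<open>x\<^sup>k\<^sup>+\<^sup>1\<close>, which produces an explicit Frechet subgradient of \<open>(f + h)/g\<close> there. Its
  norm is \<open>O(|x\<^sup>k\<^sup>+\<^sup>1 - x\<^sup>k|)\<close> because \<open>f\<close>, \<open>g\<close>, \<open>h\<close>, and hence \<open>F\<close>, are Lipschitz on the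
  sublevel set, on which \<open>g\<close> is bounded away from zero.
\<close>

text \<open>The library notion \<open>local_lipschitz\<close> concerns parametrised families; a single function
  is treated as a constant family, over the parameter set \<open>{0}\<close> below.\<close>

lemma local_lipschitz_if_loc_lipschitz_on:
  fixes T :: "'c::metric_space set"
  assumes "loc_lipschitz_on S \<phi>"
  shows "local_lipschitz T S (\<lambda>_. \<phi>)"
proof (rule local_lipschitzI)
  fix t x assume "x \<in> S"
  with assms obtain \<delta> B where "\<delta> > 0"
    and B: "\<forall>y\<in>ball x \<delta> \<inter> S. \<forall>z\<in>ball x \<delta> \<inter> S. dist (\<phi> y) (\<phi> z) \<le> B * dist y z"
    unfolding loc_lipschitz_on_def by blast
  have "(max B 0)-lipschitz_on (cball x (\<delta> / 2) \<inter> S) \<phi>"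
  proof (rule lipschitz_onI)
    fix y z assume "y \<in> cball x (\<delta> / 2) \<inter> S" "z \<in> cball x (\<delta> / 2) \<inter> S"
    then have "dist (\<phi> y) (\<phi> z) \<le> B * dist y z" using B \<open>\<delta> > 0\<close> by auto
    also have "\<dots> \<le> max B 0 * dist y z" by (simp add: mult_right_mono)
    finally show "dist (\<phi> y) (\<phi> z) \<le> max B 0 * dist y z" .
  qed simp
  then show "\<exists>u>0. \<exists>B. \<forall>t\<in>cball t u \<inter> T. B-lipschitz_on (cball x u \<inter> S) \<phi>"
    using \<open>\<delta> > 0\<close> by (intro exI[of _ "\<delta> / 2"]) auto
qed

lemma continuous_on_if_loc_lipschitz_on:
  assumes "loc_lipschitz_on S \<phi>"
  shows "continuous_on S \<phi>"
  using local_lipschitz_continuous_on[OF local_lipschitz_if_loc_lipschitz_on[OF assms] singletonI[of "0::real"]] .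

lemma lipschitz_on_compact_if_loc_lipschitz_on:
  assumes "loc_lipschitz_on S \<phi>" and "compact K" and "K \<subseteq> S"
  obtains B where "B-lipschitz_on K \<phi>"
proof -
  have "local_lipschitz {0::real} K (\<lambda>_::real. \<phi>)"
    using local_lipschitz_subset[OF local_lipschitz_if_loc_lipschitz_on[OF assms(1)]] assms(3)
    by blast
  then show ?thesis
    using local_lipschitz_compact_implies_lipschitz[where X=K and T="{0::real}" and f="\<lambda>_. \<phi>"] assms(2) that
    by auto
qed

lemma lipschitz_on_divide:
  fixes p q :: "'a::metric_space \<Rightarrow> real"
  assumes p: "A-lipschitz_on K p" and q: "B-lipschitz_on K q"
    and p_bound: "\<And>x. x \<in> K \<Longrightarrow> \<bar>p x\<bar> \<le> P" and "P \<ge> 0"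
    and q_lower: "\<And>x. x \<in> K \<Longrightarrow> q x \<ge> m" and "m > 0"
  shows "(A / m + P * B / m\<^sup>2)-lipschitz_on K (\<lambda>x. p x / q x)"
proof (rule lipschitz_onI)
  fix x y assume x: "x \<in> K" and y: "y \<in> K"
  define d where "d = dist x y"
  have qx: "q x \<ge> m" and qy: "q y \<ge> m" using q_lower x y by auto
  have "d \<ge> 0" and "A \<ge> 0" and "B \<ge> 0"
    using lipschitz_on_nonneg[OF p] lipschitz_on_nonneg[OF q] by (auto simp: d_def)
  have "\<bar>(p x - p y) / q x\<bar> = \<bar>p x - p y\<bar> / q x" using qx \<open>m > 0\<close> by simp
  also have "\<dots> \<le> A * d / q x"
    using lipschitz_onD[OF p x y] qx \<open>m > 0\<close> by (intro divide_right_mono) (auto simp: d_def dist_real_def)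
  also have "\<dots> \<le> A * d / m"
    using qx \<open>m > 0\<close> \<open>A \<ge> 0\<close> \<open>d \<ge> 0\<close> by (intro divide_left_mono) auto
  finally have first: "\<bar>(p x - p y) / q x\<bar> \<le> A / m * d" by simp
  have "\<bar>p y * (q y - q x) / (q x * q y)\<bar> = \<bar>p y\<bar> * \<bar>q x - q y\<bar> / (q x * q y)"
    using qx qy \<open>m > 0\<close> by (simp add: abs_mult abs_minus_commute)
  also have "\<dots> \<le> P * (B * d) / (q x * q y)"
    using p_bound[OF y] lipschitz_onD[OF q x y] qx qy \<open>m > 0\<close> \<open>P \<ge> 0\<close>
    by (intro divide_right_mono mult_mono) (auto simp: d_def dist_real_def)
  also have "\<dots> \<le> P * (B * d) / m\<^sup>2"
    using qx qy \<open>m > 0\<close> \<open>P \<ge> 0\<close> \<open>B \<ge> 0\<close> \<open>d \<ge> 0\<close>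
    by (intro divide_left_mono) (auto simp: power2_eq_square intro: mult_mono)
  finally have second: "\<bar>p y * (q y - q x) / (q x * q y)\<bar> \<le> P * B / m\<^sup>2 * d" by simp
  have "p x / q x - p y / q y = (p x - p y) / q x + p y * (q y - q x) / (q x * q y)"
    using qx qy \<open>m > 0\<close> by (simp add: field_simps)
  then have "\<bar>p x / q x - p y / q y\<bar> \<le> \<bar>(p x - p y) / q x\<bar> + \<bar>p y * (q y - q x) / (q x * q y)\<bar>"
    by (simp only: abs_triangle_ineq)
  with first second show "dist (p x / q x) (p y / q y) \<le> (A / m + P * B / m\<^sup>2) * dist x y"
    by (simp add: dist_real_def d_def distrib_right)
next
  show "0 \<le> A / m + P * B / m\<^sup>2"
    using lipschitz_on_nonneg[OF p] lipschitz_on_nonneg[OF q] \<open>P \<ge> 0\<close> \<open>m > 0\<close> by simp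
qed

lemma lipschitz_on_convex_if_continuous_gradient:
  fixes \<phi> :: "'a::euclidean_space \<Rightarrow> real"
  assumes deriv: "\<And>y. (\<phi> has_derivative (\<lambda>v. inner (G y) v)) (at y)"
    and cont: "continuous_on X G" and "compact X" and "convex X"
  obtains B where "B-lipschitz_on X \<phi>"
proof -
  obtain B where "B > 0" and B: "\<forall>y\<in>X. norm (G y) \<le> B"
    using compact_imp_bounded[OF compact_continuous_image[OF cont \<open>compact X\<close>]]
    by (auto simp: bounded_pos)
  have "B-lipschitz_on X \<phi>"
  proof (rule bounded_derivative_imp_lipschitz[OF has_derivative_at_withinI[OF deriv] \<open>convex X\<close>])
    show "onorm (\<lambda>v. inner (G y) v) \<le> B" if "y \<in> X" for y
    proof (rule onorm_le)
      fix v
      have "norm (inner (G y) v) \<le> norm (G y) * norm v" by (simp add: Cauchy_Schwarz_ineq2)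
      also have "\<dots> \<le> B * norm v" using B that by (simp add: mult_right_mono)
      finally show "norm (inner (G y) v) \<le> B * norm v" .
    qed
  qed (use \<open>B > 0\<close> in auto)
  then show ?thesis using that by blast
qed

lemma descent_lemma:
  fixes h :: "'a::real_inner \<Rightarrow> real"
  assumes deriv: "\<And>y. (h has_derivative (\<lambda>v. inner (G y) v)) (at y)"
    and lip: "\<And>y z. norm (G y - G z) \<le> L * norm (y - z)"
  shows "h b \<le> h a + inner (G a) (b - a) + L / 2 * (norm (b - a))\<^sup>2"
proof -
  define e where "e = b - a"
  define \<rho> where "\<rho> t = h (a + t *\<^sub>R e) - t * inner (G a) e - L * t\<^sup>2 / 2 * (norm e)\<^sup>2" for t
  have "\<rho> 1 \<le> \<rho> 0"
  proof (rule DERIV_nonpos_imp_nonincreasing[of 0 1 \<rho>])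
    fix t :: real assume t: "0 \<le> t" "t \<le> 1"
    have along_line: "((\<lambda>t. h (a + t *\<^sub>R e)) has_derivative (\<lambda>s. inner (G (a + t *\<^sub>R e)) (s *\<^sub>R e))) (at t)"
      by (rule has_derivative_compose[OF _ deriv, where f="\<lambda>t. a + t *\<^sub>R e", simplified])
         (auto intro!: derivative_eq_intros)
    have "(\<rho> has_real_derivative
        (inner (G (a + t *\<^sub>R e) - G a) e - L * t * (norm e)\<^sup>2)) (at t)"
      unfolding \<rho>_def has_field_derivative_def
      by (rule derivative_eq_intros along_line | simp)+ (auto simp: algebra_simps inner_diff_left fun_eq_iff)
    moreover have "inner (G (a + t *\<^sub>R e) - G a) e \<le> L * t * (norm e)\<^sup>2"
    proof -
      have "inner (G (a + t *\<^sub>R e) - G a) e \<le> norm (G (a + t *\<^sub>R e) - G a) * norm e"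
        by (rule norm_cauchy_schwarz)
      also have "\<dots> \<le> L * norm (t *\<^sub>R e) * norm e"
        using lip[of "a + t *\<^sub>R e" a] by (simp add: mult_right_mono)
      also have "\<dots> = L * t * (norm e)\<^sup>2" using t by (simp add: power2_eq_square)
      finally show ?thesis .
    qed
    ultimately show "\<exists>y. (\<rho> has_real_derivative y) (at t) \<and> y \<le> 0" by force
  qed simp
  then show ?thesis by (simp add: \<rho>_def e_def)
qed

lemma closed_sublevel_if_lsc_fun:
  fixes F :: "'a::topological_space \<Rightarrow> ereal"
  assumes "lsc_fun F"
  shows "closed {x. F x \<le> c}"
  unfolding closed_def open_subopen[of "- {x. F x \<le> c}"]
proof (intro ballI)
  fix x assume "x \<in> - {x. F x \<le> c}"
  then have "c < Liminf (at x) F"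
    using assms by (auto simp: lsc_fun_def not_le intro: less_le_trans)
  then have "eventually (\<lambda>y. c < F y) (at x)" using le_Liminf_iff by blast
  then obtain T where "open T" "x \<in> T" "\<forall>y\<in>T. y \<noteq> x \<longrightarrow> c < F y"
    by (auto simp: eventually_at_topological)
  then show "\<exists>T. open T \<and> x \<in> T \<and> T \<subseteq> - {x. F x \<le> c}"
    using \<open>x \<in> - {x. F x \<le> c}\<close> by (intro exI[of _ T]) (auto simp: not_le)
qed

lemma compact_sublevel_if_lsc_level_bounded:
  fixes F :: "'a::heine_borel \<Rightarrow> ereal"
  assumes "lsc_fun F" and "level_bounded F"
  shows "compact {x. F x \<le> ereal c}"
  using closed_sublevel_if_lsc_fun[OF assms(1)] assms(2)
  by (simp add: level_bounded_def compact_eq_bounded_closed)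

section \<open>Frechet subgradients of quotients\<close>

lemma eventually_has_derivative_error:
  assumes "(\<phi> has_derivative \<phi>') (at x)" and "\<epsilon> > 0"
  shows "eventually (\<lambda>z. norm (\<phi> z - \<phi> x - \<phi>' (z - x)) \<le> \<epsilon> * norm (z - x)) (at x)"
proof -
  obtain \<delta> where "\<delta> > 0" and "\<forall>z. norm (z - x) < \<delta> \<longrightarrow> norm (\<phi> z - \<phi> x - \<phi>' (z - x)) \<le> \<epsilon> * norm (z - x)"
    using assms unfolding has_derivative_at_alt by blast
  then show ?thesis unfolding eventually_at by (auto simp: dist_norm)
qed

lemma frechet_subdiffI:
  fixes \<phi> :: "'a::real_inner \<Rightarrow> ereal"
  assumes val: "\<phi> x = ereal c"
    and lower: "\<And>\<epsilon>. \<epsilon> > 0 \<Longrightarrow>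
      eventually (\<lambda>z. ereal (c + inner w (z - x) - \<epsilon> * norm (z - x)) \<le> \<phi> z) (at x)"
  shows "w \<in> frechet_subdiff \<phi> x"
proof -
  have "0 \<le> Liminf (at x) (\<lambda>z. (\<phi> z - \<phi> x - ereal (inner w (z - x))) / ereal (norm (z - x)))"
  proof (subst le_Liminf_iff, intro allI impI)
    fix y :: ereal assume "y < 0"
    then obtain r where y: "y < ereal r" and "r < 0" using ereal_dense2 by fastforce
    define \<epsilon> where "\<epsilon> = - r"
    have "\<epsilon> > 0" using \<open>r < 0\<close> by (simp add: \<epsilon>_def)
    have "eventually (\<lambda>z. z \<noteq> x) (at x)" by (simp add: eventually_at_filter)
    with lower[OF \<open>\<epsilon> > 0\<close>]
    show "eventually (\<lambda>z. y < (\<phi> z - \<phi> x - ereal (inner w (z - x))) / ereal (norm (z - x))) (at x)"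
    proof eventually_elim
      case (elim z)
      define n where "n = norm (z - x)"
      have "n > 0" using elim by (simp add: n_def)
      show ?case
      proof (cases "\<phi> z")
        case (real a)
        have "- \<epsilon> \<le> (a - c - inner w (z - x)) / n"
          using elim(1) real \<open>n > 0\<close> by (simp add: pos_le_divide_eq n_def algebra_simps)
        then have "ereal (- \<epsilon>) \<le> (\<phi> z - \<phi> x - ereal (inner w (z - x))) / ereal n"
          using real val \<open>n > 0\<close> by simp
        then show ?thesis using y by (simp add: n_def \<epsilon>_def)
      next
        case PInf
        then show ?thesis using val \<open>n > 0\<close> y by (cases y) (auto simp: n_def)
      next
        case MInf
        then show ?thesis using elim(1) by simp
      qed
    qed
  qed
  then show ?thesis using val by (simp add: frechet_subdiff_def)
qed

lemma frechet_subdiff_subset_limiting_subdiff: "frechet_subdiff \<phi> x \<subseteq> limiting_subdiff \<phi> x"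
proof
  fix v assume "v \<in> frechet_subdiff \<phi> x"
  then show "v \<in> limiting_subdiff \<phi> x"
    unfolding limiting_subdiff_def by (intro CollectI exI[of _ "\<lambda>_. x"] exI[of _ "\<lambda>_. v"]) auto
qed

lemma eventually_quotient_lower_bound:
  fixes N g :: "'a::real_inner \<Rightarrow> real"
  assumes "continuous (at x) g" and "g x > 0"
    and N: "\<And>\<epsilon>. \<epsilon> > 0 \<Longrightarrow>
      eventually (\<lambda>z. Q z \<longrightarrow> inner u (z - x) - \<epsilon> * norm (z - x) \<le> N z) (at x)"
    and "\<epsilon> > 0"
  shows "eventually (\<lambda>z. Q z \<longrightarrow> inner ((1 / g x) *\<^sub>R u) (z - x) - \<epsilon> * norm (z - x) \<le> N z / g z) (at x)"
proof -
  define G where "G = g x"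
  define \<eta> where "\<eta> = min (G / 2) (\<epsilon> * G\<^sup>2 / (4 * (norm u + 1)))"
  have "G > 0" using \<open>g x > 0\<close> by (simp add: G_def)
  then have "\<eta> > 0" using \<open>\<epsilon> > 0\<close> by (simp add: \<eta>_def add_nonneg_pos)
  have "eventually (\<lambda>z. dist (g z) G < \<eta>) (at x)"
    using assms(1) \<open>\<eta> > 0\<close> unfolding continuous_at G_def by (rule tendstoD)
  moreover have "\<epsilon> * G / 4 > 0" using \<open>\<epsilon> > 0\<close> \<open>G > 0\<close> by simp
  note N[OF this]
  ultimately show ?thesis
  proof eventually_elim
    case (elim z)
    define n where "n = norm (z - x)"
    define ip where "ip = inner u (z - x)"
    have "\<bar>g z - G\<bar> \<le> \<eta>" using elim(1) by (simp add: dist_real_def)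
    moreover have "\<eta> \<le> G / 2" unfolding \<eta>_def by (rule min.cobounded1)
    ultimately have "g z \<ge> G / 2" by linarith
    then have "g z > 0" using \<open>G > 0\<close> by linarith
    have "n \<ge> 0" by (simp add: n_def)
    show ?case
    proof
      assume "Q z"
      have "(N z - ip) / g z \<ge> - (\<epsilon> * G / 4 * n) / g z"
        using elim(2) \<open>Q z\<close> \<open>g z > 0\<close> by (intro divide_right_mono) (auto simp: n_def ip_def)
      moreover have "\<epsilon> * G / 4 * n / g z \<le> \<epsilon> * G / 4 * n / (G / 2)"
        using \<open>g z \<ge> G / 2\<close> \<open>G > 0\<close> \<open>\<epsilon> > 0\<close> \<open>n \<ge> 0\<close> by (intro divide_left_mono) auto
      moreover have "\<epsilon> * G / 4 * n / (G / 2) = \<epsilon> * n / 2" using \<open>G > 0\<close> by simp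
      ultimately have first: "(N z - ip) / g z \<ge> - (\<epsilon> * n / 2)" by linarith
      have "ip * (1 / g z - 1 / G) = ip * (G - g z) / (g z * G)"
        using \<open>g z > 0\<close> \<open>G > 0\<close> by (simp add: field_simps)
      then have "\<bar>ip * (1 / g z - 1 / G)\<bar> = \<bar>ip\<bar> * \<bar>g z - G\<bar> / (g z * G)"
        using \<open>g z > 0\<close> \<open>G > 0\<close> by (simp add: abs_mult abs_minus_commute)
      also have "\<dots> \<le> (norm u * n) * \<eta> / (G / 2 * G)"
        using \<open>g z \<ge> G / 2\<close> \<open>G > 0\<close> \<open>\<bar>g z - G\<bar> \<le> \<eta>\<close> \<open>\<eta> > 0\<close>
        by (intro frac_le mult_mono) (auto simp: ip_def n_def Cauchy_Schwarz_ineq2)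
      also have "\<dots> \<le> (norm u * n) * (\<epsilon> * G\<^sup>2 / (4 * (norm u + 1))) / (G / 2 * G)"
        using \<open>G > 0\<close> \<open>n \<ge> 0\<close>
        by (intro divide_right_mono mult_left_mono) (auto simp: \<eta>_def)
      also have "\<dots> = (\<epsilon> * n / 2) * (norm u / (norm u + 1))"
      proof -
        have "norm u + 1 > 0" by (simp add: add_nonneg_pos)
        then show ?thesis using \<open>G > 0\<close> by (simp add: divide_simps power2_eq_square)
      qed
      also have "\<dots> \<le> \<epsilon> * n / 2"
        using \<open>\<epsilon> > 0\<close> \<open>n \<ge> 0\<close> by (intro mult_left_le) (auto simp: divide_le_eq_1 add_nonneg_pos)
      finally have second: "ip * (1 / g z - 1 / G) \<ge> - (\<epsilon> * n / 2)" by linarith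
      have "N z / g z = ip / G + (N z - ip) / g z + ip * (1 / g z - 1 / G)"
        using \<open>g z > 0\<close> \<open>G > 0\<close> by (simp add: field_simps)
      with first second show "inner ((1 / g x) *\<^sub>R u) (z - x) - \<epsilon> * norm (z - x) \<le> N z / g z"
        by (simp add: G_def ip_def n_def)
    qed
  qed
qed

lemma eventually_frac_numerator_lower_bound:
  fixes f :: "'a::real_inner \<Rightarrow> ereal" and g h :: "'a \<Rightarrow> real"
  assumes finite: "\<And>u. f u \<noteq> -\<infinity>"
    and Dh: "(h has_derivative (\<lambda>y. inner Gh y)) (at x)"
    and Dg: "(g has_derivative (\<lambda>y. inner Gg y)) (at x)"
    and "\<alpha> > 0"
    and model: "\<And>u r. f u = ereal r \<Longrightarrow>
      a - C * g x + inner v (u - x) - (norm (u - x))\<^sup>2 / (2 * \<alpha>) \<le> r - C * g u"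
    and q: "q * g x = a + h x"
    and "\<epsilon> > 0"
  shows "eventually (\<lambda>z. f z < \<infinity> \<longrightarrow>
      inner (v + Gh + (C - q) *\<^sub>R Gg) (z - x) - \<epsilon> * norm (z - x) \<le> real_of_ereal (f z) + h z - q * g z) (at x)"
proof -
  define D where "D = C - q"
  define \<epsilon>' where "\<epsilon>' = \<epsilon> / (2 + \<bar>D\<bar>)"
  have "\<epsilon>' > 0" using \<open>\<epsilon> > 0\<close> by (simp add: \<epsilon>'_def add_pos_nonneg)
  have near: "eventually (\<lambda>z. norm (z - x) < 2 * \<alpha> * \<epsilon>') (at x)"
    using \<open>\<alpha> > 0\<close> \<open>\<epsilon>' > 0\<close> by (auto simp: eventually_at dist_norm intro!: exI[of _ "2 * \<alpha> * \<epsilon>'"])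
  from near eventually_has_derivative_error[OF Dh \<open>\<epsilon>' > 0\<close>] eventually_has_derivative_error[OF Dg \<open>\<epsilon>' > 0\<close>]
  show ?thesis
  proof eventually_elim
    case (elim z)
    define n where "n = norm (z - x)"
    show ?case
    proof
      assume "f z < \<infinity>"
      then obtain r where r: "f z = ereal r" using finite[of z] by (cases "f z") auto
      have "n * n \<le> n * (2 * \<alpha> * \<epsilon>')"
        using elim(1) by (intro mult_left_mono) (auto simp: n_def)
      then have "(norm (z - x))\<^sup>2 / (2 * \<alpha>) \<le> \<epsilon>' * n"
        using \<open>\<alpha> > 0\<close> by (simp add: n_def power2_eq_square divide_le_eq algebra_simps)
      with model[OF r] have f_part: "r - C * g z - (a - C * g x) \<ge> inner v (z - x) - \<epsilon>' * n"
        by linarith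
      have h_part: "h z - h x \<ge> inner Gh (z - x) - \<epsilon>' * n"
        using elim(2) by (simp add: n_def abs_le_iff)
      have "\<bar>D * (g z - g x - inner Gg (z - x))\<bar> \<le> \<bar>D\<bar> * (\<epsilon>' * n)"
        using elim(3) by (simp add: abs_mult n_def mult_left_mono)
      then have g_part: "D * (g z - g x) \<ge> D * inner Gg (z - x) - \<bar>D\<bar> * \<epsilon>' * n"
        by (simp add: abs_le_iff algebra_simps)
      have "2 + \<bar>D\<bar> > 0" by (simp add: add_pos_nonneg)
      then have "\<epsilon>' * (2 + \<bar>D\<bar>) = \<epsilon>" by (simp add: \<epsilon>'_def)
      then have "\<epsilon>' * n + \<epsilon>' * n + \<bar>D\<bar> * \<epsilon>' * n = \<epsilon> * n"
        by (metis distrib_left mult.commute mult.left_commute mult_2_right add.assoc)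
      moreover have "r + h z - q * g z = (r - C * g z - (a - C * g x)) + (h z - h x) + D * (g z - g x)"
        using q by (simp add: D_def algebra_simps)
      ultimately show "inner (v + Gh + (C - q) *\<^sub>R Gg) (z - x) - \<epsilon> * norm (z - x)
          \<le> real_of_ereal (f z) + h z - q * g z"
        using f_part h_part g_part r by (simp add: inner_add_left D_def n_def)
    qed
  qed
qed

lemma frechet_subdiff_frac_obj:
  fixes f :: "'a::real_inner \<Rightarrow> ereal" and g h :: "'a \<Rightarrow> real"
  assumes fx: "f x = ereal a" and "g x > 0" and finite: "\<And>u. f u \<noteq> -\<infinity>"
    and Dh: "(h has_derivative (\<lambda>y. inner Gh y)) (at x)"
    and Dg: "(g has_derivative (\<lambda>y. inner Gg y)) (at x)"
    and "\<alpha> > 0"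
    and model: "\<And>u r. f u = ereal r \<Longrightarrow>
      a - C * g x + inner v (u - x) - (norm (u - x))\<^sup>2 / (2 * \<alpha>) \<le> r - C * g u"
  shows "(1 / g x) *\<^sub>R (v + Gh + (C - (a + h x) / g x) *\<^sub>R Gg) \<in> frechet_subdiff (frac_obj f g h) x"
proof -
  define q where "q = (a + h x) / g x"
  define u where "u = v + Gh + (C - q) *\<^sub>R Gg"
  have Fx: "frac_obj f g h x = ereal q"
    using fx \<open>g x > 0\<close> by (simp add: frac_obj_def q_def)
  have "continuous (at x) g" using Dg by (rule has_derivative_continuous)
  have "eventually (\<lambda>z. ereal (q + inner ((1 / g x) *\<^sub>R u) (z - x) - \<epsilon> * norm (z - x))
      \<le> frac_obj f g h z) (at x)" if "\<epsilon> > 0" for \<epsilon>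
  proof -
    have "eventually (\<lambda>z. g z > 0) (at x)"
      using \<open>continuous (at x) g\<close> \<open>g x > 0\<close> unfolding continuous_at by (rule order_tendstoD)
    moreover have "eventually (\<lambda>z. f z < \<infinity> \<longrightarrow> inner ((1 / g x) *\<^sub>R u) (z - x) - \<epsilon> * norm (z - x)
        \<le> (real_of_ereal (f z) + h z - q * g z) / g z) (at x)"
    proof (rule eventually_quotient_lower_bound[where Q="\<lambda>z. f z < \<infinity>"
          and N="\<lambda>z. real_of_ereal (f z) + h z - q * g z", OF \<open>continuous (at x) g\<close> \<open>g x > 0\<close> _ \<open>\<epsilon> > 0\<close>])
      fix \<epsilon>' :: real assume "\<epsilon>' > 0"
      have "q * g x = a + h x" using \<open>g x > 0\<close> by (simp add: q_def)
      from eventually_frac_numerator_lower_bound[where f=f and g=g and x=x, OF finite Dh Dg \<open>\<alpha> > 0\<close> model this \<open>\<epsilon>' > 0\<close>]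
      show "eventually (\<lambda>z. f z < \<infinity> \<longrightarrow> inner u (z - x) - \<epsilon>' * norm (z - x)
          \<le> real_of_ereal (f z) + h z - q * g z) (at x)"
        by (simp only: u_def)
    qed
    ultimately show ?thesis
    proof eventually_elim
      case (elim z)
      show ?case
      proof (cases "f z < \<infinity>")
        case True
        with elim(2) have lower: "inner ((1 / g x) *\<^sub>R u) (z - x) - \<epsilon> * norm (z - x)
            \<le> (real_of_ereal (f z) + h z - q * g z) / g z" by blast
        have "(real_of_ereal (f z) + h z - q * g z) / g z = (real_of_ereal (f z) + h z) / g z - q"
          using elim(1) by (simp add: field_simps)
        with lower have "q + inner ((1 / g x) *\<^sub>R u) (z - x) - \<epsilon> * norm (z - x)
            \<le> (real_of_ereal (f z) + h z) / g z" by simp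
        moreover have "frac_obj f g h z = ereal ((real_of_ereal (f z) + h z) / g z)"
          using True elim(1) by (simp add: frac_obj_def)
        ultimately show ?thesis by simp
      next
        case False
        then show ?thesis by (simp add: frac_obj_def)
      qed
    qed
  qed
  from frechet_subdiffI[OF Fx this] show ?thesis by (simp add: u_def q_def)
qed

section \<open>Proximal steps\<close>

lemma prox_scaled_le:
  fixes f :: "'a::real_normed_vector \<Rightarrow> ereal"
  assumes prox: "x1 \<in> prox (\<lambda>u. ereal \<alpha> * (f u - ereal (C * g u))) y" and "\<alpha> > 0"
    and finite: "\<And>u. f u \<noteq> -\<infinity>" and fu: "f u = ereal r"
  obtains r1 where "f x1 = ereal r1"
    and "\<alpha> * (r1 - C * g x1) + (norm (x1 - y))\<^sup>2 / 2 \<le> \<alpha> * (r - C * g u) + (norm (u - y))\<^sup>2 / 2"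
proof -
  have le: "ereal \<alpha> * (f x1 - ereal (C * g x1)) + ereal ((norm (x1 - y))\<^sup>2 / 2)
      \<le> ereal \<alpha> * (f u - ereal (C * g u)) + ereal ((norm (u - y))\<^sup>2 / 2)"
    using prox unfolding prox_def by blast
  show ?thesis
  proof (cases "f x1")
    case (real r1)
    with le fu show ?thesis by (intro that[of r1]) simp_all
  next
    case PInf
    with le fu \<open>\<alpha> > 0\<close> show ?thesis by simp
  qed (use finite in blast)
qed

lemma prox_lower_model:
  fixes f :: "'a::real_inner \<Rightarrow> ereal"
  assumes prox: "x1 \<in> prox (\<lambda>u. ereal \<alpha> * (f u - ereal (C * g u))) y" and "\<alpha> > 0"
    and finite: "\<And>u. f u \<noteq> -\<infinity>" and "f x1 = ereal r1" and "f u = ereal r"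
  shows "r1 - C * g x1 + inner ((1 / \<alpha>) *\<^sub>R (y - x1)) (u - x1) - (norm (u - x1))\<^sup>2 / (2 * \<alpha>) \<le> r - C * g u"
proof -
  obtain r1' where "f x1 = ereal r1'"
    and le: "\<alpha> * (r1' - C * g x1) + (norm (x1 - y))\<^sup>2 / 2 \<le> \<alpha> * (r - C * g u) + (norm (u - y))\<^sup>2 / 2"
    using prox_scaled_le[where f=f, OF prox \<open>\<alpha> > 0\<close> finite \<open>f u = ereal r\<close>] by blast
  then have "r1' = r1" using \<open>f x1 = ereal r1\<close> by simp
  have "(norm (u - y))\<^sup>2 = (norm (u - x1))\<^sup>2 + 2 * inner (u - x1) (x1 - y) + (norm (x1 - y))\<^sup>2"
    using dot_norm[of "u - x1" "x1 - y"] by simp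
  with le \<open>r1' = r1\<close> have "\<alpha> * (r1 - C * g x1) \<le> \<alpha> * (r - C * g u) + (norm (u - x1))\<^sup>2 / 2 + inner (u - x1) (x1 - y)"
    by (simp add: add_divide_distrib)
  then have "\<alpha> * (r1 - C * g x1 + inner ((1 / \<alpha>) *\<^sub>R (y - x1)) (u - x1) - (norm (u - x1))\<^sup>2 / (2 * \<alpha>))
      \<le> \<alpha> * (r - C * g u)"
    using \<open>\<alpha> > 0\<close> by (simp add: algebra_simps inner_diff_left inner_diff_right inner_commute)
  then show ?thesis using \<open>\<alpha> > 0\<close> by simp
qed

lemma prox_gradient_step_decrease:
  fixes f :: "'a::real_inner \<Rightarrow> ereal" and g h :: "'a \<Rightarrow> real"
  assumes prox: "x1 \<in> prox (\<lambda>u. ereal \<alpha> * (f u - ereal (C * g u))) (x - \<alpha> *\<^sub>R G x)"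
    and "\<alpha> > 0" and finite: "\<And>u. f u \<noteq> -\<infinity>" and "f x = ereal a"
    and h_deriv: "\<And>y. (h has_derivative (\<lambda>v. inner (G y) v)) (at y)"
    and h_lip: "\<And>y z. norm (G y - G z) \<le> L * norm (y - z)"
  obtains a1 where "f x1 = ereal a1"
    and "a1 - C * g x1 + h x1 \<le> a - C * g x + h x - (1 / \<alpha> - L) / 2 * (norm (x1 - x))\<^sup>2"
proof -
  define e where "e = x1 - x"
  obtain a1 where "f x1 = ereal a1" and le: "\<alpha> * (a1 - C * g x1) + (norm (x1 - (x - \<alpha> *\<^sub>R G x)))\<^sup>2 / 2
      \<le> \<alpha> * (a - C * g x) + (norm (x - (x - \<alpha> *\<^sub>R G x)))\<^sup>2 / 2"
    using prox_scaled_le[where f=f, OF prox \<open>\<alpha> > 0\<close> finite \<open>f x = ereal a\<close>] by blast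
  have "(norm (x1 - (x - \<alpha> *\<^sub>R G x)))\<^sup>2 = (norm e)\<^sup>2 + 2 * \<alpha> * inner e (G x) + (norm (\<alpha> *\<^sub>R G x))\<^sup>2"
    using dot_norm[of e "\<alpha> *\<^sub>R G x"] by (simp add: e_def algebra_simps)
  with le have "\<alpha> * (a1 - C * g x1 + inner e (G x)) + (norm e)\<^sup>2 / 2 \<le> \<alpha> * (a - C * g x)"
    by (simp add: algebra_simps add_divide_distrib)
  then have "a1 - C * g x1 + inner e (G x) + (norm e)\<^sup>2 / (2 * \<alpha>) \<le> a - C * g x"
    using \<open>\<alpha> > 0\<close> by (simp add: field_simps)
  moreover have "h x1 \<le> h x + inner (G x) e + L / 2 * (norm e)\<^sup>2"
    using descent_lemma[OF h_deriv h_lip, of x1 x] by (simp add: e_def)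
  ultimately have "a1 - C * g x1 + h x1 \<le> a - C * g x + h x - ((norm e)\<^sup>2 / (2 * \<alpha>) - L / 2 * (norm e)\<^sup>2)"
    using inner_commute[of e "G x"] by linarith
  also have "\<dots> = a - C * g x + h x - (1 / \<alpha> - L) / 2 * (norm e)\<^sup>2"
    using \<open>\<alpha> > 0\<close> by (simp add: field_simps)
  finally have "a1 - C * g x1 + h x1 \<le> a - C * g x + h x - (1 / \<alpha> - L) / 2 * (norm e)\<^sup>2" .
  with \<open>f x1 = ereal a1\<close> show ?thesis by (intro that) (simp_all add: e_def)
qed

section \<open>The proximal-gradient iteration for the quotient\<close>

locale ppga =
  fixes f :: "'a::euclidean_space \<Rightarrow> ereal" and g h :: "'a \<Rightarrow> real"
    and grad_g grad_h :: "'a \<Rightarrow> 'a" and L :: real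
    and x :: "nat \<Rightarrow> 'a" and \<alpha> :: "nat \<Rightarrow> real" and \<alpha>_lo \<alpha>_up :: real
  assumes f_finite: "\<And>u. f u \<noteq> -\<infinity>"
    and f_loc_lipschitz: "loc_lipschitz_on (edom f \<inter> {y. g y \<noteq> 0}) (\<lambda>y. real_of_ereal (f y))"
    and g_deriv: "\<And>y. (g has_derivative (\<lambda>v. inner (grad_g y) v)) (at y)"
    and grad_g_cont: "continuous_on UNIV grad_g"
    and g_pos: "\<And>y. g y \<noteq> 0 \<Longrightarrow> f y < \<infinity> \<Longrightarrow> g y > 0"
    and h_deriv: "\<And>y. (h has_derivative (\<lambda>v. inner (grad_h y) v)) (at y)"
    and grad_h_lip: "\<And>y z. norm (grad_h y - grad_h z) \<le> L * norm (y - z)"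
    and fh_nonneg: "\<And>y. f y < \<infinity> \<Longrightarrow> f y + ereal (h y) \<ge> 0"
    and F_lsc: "lsc_fun (frac_obj f g h)"
    and F_level_bounded: "level_bounded (frac_obj f g h)"
    and x0_dom: "g (x 0) \<noteq> 0" "f (x 0) < \<infinity>"
    and step_lo: "0 < \<alpha>_lo" and step_up: "\<alpha>_up < 1 / L"
    and step: "\<And>k. \<alpha>_lo \<le> \<alpha> k \<and> \<alpha> k \<le> \<alpha>_up"
    and iter: "\<And>k. x (Suc k) \<in> prox (\<lambda>u. ereal (\<alpha> k) *
      (f u - ereal (real_of_ereal (frac_obj f g h (x k)) * g u))) (x k - \<alpha> k *\<^sub>R grad_h (x k))"
begin

definition dom_F :: "'a set" where
  "dom_F = {u. g u \<noteq> 0 \<and> f u < \<infinity>}"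

definition F_val :: "'a \<Rightarrow> real" where
  "F_val u = (real_of_ereal (f u) + h u) / g u"

definition decrease_rate :: real where
  "decrease_rate = (1 / \<alpha>_up - L) / 2"

lemma frac_obj_dom: "u \<in> dom_F \<Longrightarrow> frac_obj f g h u = ereal (F_val u)"
  by (simp add: dom_F_def frac_obj_def F_val_def)

lemma frac_obj_outside_dom: "u \<notin> dom_F \<Longrightarrow> frac_obj f g h u = \<infinity>"
  by (auto simp: dom_F_def frac_obj_def)

lemma f_dom: "u \<in> dom_F \<Longrightarrow> f u = ereal (real_of_ereal (f u))"
  using f_finite[of u] by (cases "f u") (auto simp: dom_F_def)

lemma g_dom_pos: "u \<in> dom_F \<Longrightarrow> g u > 0"
  using g_pos by (simp add: dom_F_def)

lemma F_val_nonneg: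
  assumes "u \<in> dom_F"
  shows "F_val u \<ge> 0"
proof -
  have "f u + ereal (h u) = ereal (real_of_ereal (f u) + h u)"
    using f_dom[OF assms] by (metis plus_ereal.simps(1))
  then have "real_of_ereal (f u) + h u \<ge> 0"
    using fh_nonneg[of u] assms by (simp add: dom_F_def)
  then show ?thesis using g_dom_pos[OF assms] by (simp add: F_val_def)
qed

lemma step_pos: "\<alpha> k > 0"
  using step[of k] step_lo by linarith

lemma decrease_rate_pos: "decrease_rate > 0"
proof -
  have "\<alpha>_up > 0" using step[of 0] step_lo by linarith
  have "L < 1 / \<alpha>_up"
  proof (cases "L > 0")
    case True
    with step_up have "\<alpha>_up * L < 1" by (simp add: pos_less_divide_eq)
    with \<open>\<alpha>_up > 0\<close> show ?thesis by (simp add: pos_less_divide_eq mult.commute)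
  next
    case False
    with \<open>\<alpha>_up > 0\<close> show ?thesis by (simp add: not_less le_less_trans)
  qed
  then show ?thesis by (simp add: decrease_rate_def)
qed

lemma surrogate_decrease:
  assumes "x k \<in> dom_F"
  obtains a1 where "f (x (Suc k)) = ereal a1"
    and "a1 + h (x (Suc k)) - F_val (x k) * g (x (Suc k)) \<le> - (decrease_rate * (norm (x (Suc k) - x k))\<^sup>2)"
proof -
  define C where "C = F_val (x k)"
  define E where "E = (norm (x (Suc k) - x k))\<^sup>2"
  have prox: "x (Suc k) \<in> prox (\<lambda>u. ereal (\<alpha> k) * (f u - ereal (C * g u))) (x k - \<alpha> k *\<^sub>R grad_h (x k))"
    using iter[of k] frac_obj_dom[OF assms] by (simp add: C_def)
  obtain a1 where fx1: "f (x (Suc k)) = ereal a1"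
    and "a1 - C * g (x (Suc k)) + h (x (Suc k)) \<le> real_of_ereal (f (x k)) - C * g (x k) + h (x k)
      - (1 / \<alpha> k - L) / 2 * E"
    using prox_gradient_step_decrease[where f=f, OF prox step_pos f_finite f_dom[OF assms] h_deriv grad_h_lip]
    unfolding E_def by blast
  moreover have "real_of_ereal (f (x k)) - C * g (x k) + h (x k) = 0"
    using g_dom_pos[OF assms] by (simp add: C_def F_val_def)
  moreover have "decrease_rate * E \<le> (1 / \<alpha> k - L) / 2 * E"
    using step[of k] step_pos[of k]
    by (auto simp: decrease_rate_def E_def intro!: mult_right_mono divide_right_mono frac_le)
  ultimately have "a1 + h (x (Suc k)) - C * g (x (Suc k)) \<le> - (decrease_rate * E)"
    by linarith
  with fx1 show ?thesis unfolding C_def E_def by (rule that)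
qed

lemma iterate_step:
  assumes "x k \<in> dom_F"
  shows "x (Suc k) \<in> dom_F"
    and "F_val (x (Suc k)) + decrease_rate * (norm (x (Suc k) - x k))\<^sup>2 / g (x (Suc k)) \<le> F_val (x k)"
proof -
  define E where "E = (norm (x (Suc k) - x k))\<^sup>2"
  obtain a1 where fx1: "f (x (Suc k)) = ereal a1"
    and decrease: "a1 + h (x (Suc k)) - F_val (x k) * g (x (Suc k)) \<le> - (decrease_rate * E)"
    using surrogate_decrease[OF assms] unfolding E_def by blast
  have "g (x (Suc k)) \<noteq> 0"
  proof
    assume "g (x (Suc k)) = 0"
    moreover have "a1 + h (x (Suc k)) \<ge> 0" using fh_nonneg[of "x (Suc k)"] fx1 by simp
    moreover have "a1 + h (x (Suc k)) \<le> - (decrease_rate * E)"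
      using decrease \<open>g (x (Suc k)) = 0\<close> by simp
    ultimately have "decrease_rate * E \<le> 0" by linarith
    then have "x (Suc k) = x k" using decrease_rate_pos by (simp add: E_def mult_le_0_iff)
    with \<open>g (x (Suc k)) = 0\<close> assms show False by (simp add: dom_F_def)
  qed
  then show "x (Suc k) \<in> dom_F" using fx1 by (simp add: dom_F_def)
  then have "g (x (Suc k)) > 0" by (rule g_dom_pos)
  moreover have "a1 + h (x (Suc k)) + decrease_rate * E \<le> F_val (x k) * g (x (Suc k))"
    using decrease by linarith
  ultimately have "(a1 + h (x (Suc k)) + decrease_rate * E) / g (x (Suc k)) \<le> F_val (x k)"
    by (simp add: pos_divide_le_eq)
  then show "F_val (x (Suc k)) + decrease_rate * E / g (x (Suc k)) \<le> F_val (x k)"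
    using fx1 by (simp add: F_val_def[of "x (Suc k)"] add_divide_distrib)
qed

lemma iterate_dom: "x k \<in> dom_F"
  by (induction k) (use x0_dom iterate_step(1) in \<open>auto simp: dom_F_def\<close>)

lemma F_val_sufficient_decrease:
  "F_val (x (Suc k)) + decrease_rate * (norm (x (Suc k) - x k))\<^sup>2 / g (x (Suc k)) \<le> F_val (x k)"
  by (rule iterate_step(2)[OF iterate_dom])

lemma F_val_Suc_le: "F_val (x (Suc k)) \<le> F_val (x k)"
proof -
  have "decrease_rate * (norm (x (Suc k) - x k))\<^sup>2 / g (x (Suc k)) \<ge> 0"
    using decrease_rate_pos g_dom_pos[OF iterate_dom, of "Suc k"] by simp
  with F_val_sufficient_decrease[of k] show ?thesis by linarith
qed

lemma F_val_iterate_le_initial: "F_val (x k) \<le> F_val (x 0)"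
  by (induction k) (use F_val_Suc_le order_trans in auto)

definition sublevel :: "'a set" where
  "sublevel = {u. frac_obj f g h u \<le> ereal (F_val (x 0))}"

lemma sublevel_dom: "sublevel \<subseteq> dom_F"
  using frac_obj_outside_dom by (force simp: sublevel_def)

lemma compact_sublevel: "compact sublevel"
  unfolding sublevel_def by (rule compact_sublevel_if_lsc_level_bounded[OF F_lsc F_level_bounded])

lemma iterate_sublevel: "x k \<in> sublevel"
  using F_val_iterate_le_initial frac_obj_dom[OF iterate_dom] by (simp add: sublevel_def)

lemma g_continuous: "continuous_on S g"
  using has_derivative_continuous[OF g_deriv] by (simp add: continuous_at_imp_continuous_on)

lemma g_bounds_on_sublevel:
  obtains g_min g_max where "g_min > 0" and "\<And>u. u \<in> sublevel \<Longrightarrow> g_min \<le> g u \<and> g u \<le> g_max"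
proof -
  have "sublevel \<noteq> {}" using iterate_sublevel by blast
  obtain u_min where "u_min \<in> sublevel" and min: "\<forall>u\<in>sublevel. g u_min \<le> g u"
    using continuous_attains_inf[OF compact_sublevel \<open>sublevel \<noteq> {}\<close> g_continuous] by blast
  obtain u_max where max: "\<forall>u\<in>sublevel. g u \<le> g u_max"
    using continuous_attains_sup[OF compact_sublevel \<open>sublevel \<noteq> {}\<close> g_continuous] by blast
  have "g u_min > 0" using g_dom_pos sublevel_dom \<open>u_min \<in> sublevel\<close> by blast
  with min max show ?thesis using that by blast
qed

theorem sufficient_decrease:
  "\<exists>a>0. \<forall>k. frac_obj f g h (x (Suc k)) + ereal (a / 2 * (norm (x (Suc k) - x k))\<^sup>2)
      \<le> frac_obj f g h (x k)"
proof -
  obtain g_min g_max where "g_min > 0" and g_bounds: "\<And>u. u \<in> sublevel \<Longrightarrow> g_min \<le> g u \<and> g u \<le> g_max"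
    using g_bounds_on_sublevel by blast
  have "g_max > 0" using g_bounds[OF iterate_sublevel[of 0]] \<open>g_min > 0\<close> by linarith
  have "F_val (x (Suc k)) + decrease_rate / g_max * (norm (x (Suc k) - x k))\<^sup>2 \<le> F_val (x k)" for k
  proof -
    have "decrease_rate * (norm (x (Suc k) - x k))\<^sup>2 / g_max
        \<le> decrease_rate * (norm (x (Suc k) - x k))\<^sup>2 / g (x (Suc k))"
      using g_bounds[OF iterate_sublevel] g_dom_pos[OF iterate_dom] decrease_rate_pos \<open>g_max > 0\<close>
      by (intro divide_left_mono) auto
    with F_val_sufficient_decrease[of k] show ?thesis by simp
  qed
  then show ?thesis
    using decrease_rate_pos \<open>g_max > 0\<close> frac_obj_dom[OF iterate_dom]
    by (intro exI[of _ "2 * decrease_rate / g_max"]) simp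
qed

lemma sublevel_subset_cball:
  obtains c R where "sublevel \<subseteq> cball c R"
  using compact_imp_bounded[OF compact_sublevel] unfolding bounded_subset_cball by blast

lemma grad_h_lipschitz: "(max L 0)-lipschitz_on UNIV grad_h"
proof (rule lipschitz_onI)
  fix y z :: 'a
  have "dist (grad_h y) (grad_h z) \<le> L * dist y z" using grad_h_lip by (simp add: dist_norm)
  also have "\<dots> \<le> max L 0 * dist y z" by (simp add: mult_right_mono)
  finally show "dist (grad_h y) (grad_h z) \<le> max L 0 * dist y z" .
qed simp

lemma numerator_lipschitz_on_sublevel:
  obtains M where "M-lipschitz_on sublevel (\<lambda>u. real_of_ereal (f u) + h u)"
proof -
  obtain c R where R: "sublevel \<subseteq> cball c R"
    by (rule sublevel_subset_cball)
  have "continuous_on (cball c R) grad_h"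
    using lipschitz_on_continuous_on[OF lipschitz_on_subset[OF grad_h_lipschitz subset_UNIV]] .
  then obtain B_h where "B_h-lipschitz_on (cball c R) h"
    using lipschitz_on_convex_if_continuous_gradient[OF h_deriv _ compact_cball convex_cball] by blast
  then have h: "B_h-lipschitz_on sublevel h" using R by (rule lipschitz_on_subset)
  have "sublevel \<subseteq> edom f \<inter> {y. g y \<noteq> 0}"
    using sublevel_dom by (auto simp: dom_F_def edom_def)
  then obtain B_f where "B_f-lipschitz_on sublevel (\<lambda>u. real_of_ereal (f u))"
    using lipschitz_on_compact_if_loc_lipschitz_on[OF f_loc_lipschitz compact_sublevel] by blast
  from lipschitz_on_add[OF this h] that show ?thesis by blast
qed

lemma g_lipschitz_on_sublevel:
  obtains M where "M-lipschitz_on sublevel g"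
proof -
  obtain c R where R: "sublevel \<subseteq> cball c R"
    by (rule sublevel_subset_cball)
  obtain B where "B-lipschitz_on (cball c R) g"
    using lipschitz_on_convex_if_continuous_gradient[OF g_deriv
        continuous_on_subset[OF grad_g_cont subset_UNIV] compact_cball convex_cball] by blast
  from lipschitz_on_subset[OF this R] that show ?thesis by blast
qed

lemma numerator_bound_on_sublevel:
  assumes "u \<in> sublevel" and "g u \<le> g_max"
  shows "\<bar>real_of_ereal (f u) + h u\<bar> \<le> F_val (x 0) * g_max"
proof -
  have "u \<in> dom_F" using assms(1) sublevel_dom by blast
  then have "F_val u \<le> F_val (x 0)" using assms(1) frac_obj_dom by (simp add: sublevel_def)
  moreover have "real_of_ereal (f u) + h u = F_val u * g u"
    using g_dom_pos[OF \<open>u \<in> dom_F\<close>] by (simp add: F_val_def)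
  ultimately show ?thesis
    using F_val_nonneg[OF \<open>u \<in> dom_F\<close>] g_dom_pos[OF \<open>u \<in> dom_F\<close>] assms(2)
    by (simp add: abs_mult mult_mono)
qed

lemma F_val_lipschitz_on_sublevel:
  obtains M where "M-lipschitz_on sublevel F_val"
proof -
  obtain A where A: "A-lipschitz_on sublevel (\<lambda>u. real_of_ereal (f u) + h u)"
    by (rule numerator_lipschitz_on_sublevel)
  obtain B where B: "B-lipschitz_on sublevel g"
    by (rule g_lipschitz_on_sublevel)
  obtain g_min g_max where "g_min > 0" and g_bounds: "\<And>u. u \<in> sublevel \<Longrightarrow> g_min \<le> g u \<and> g u \<le> g_max"
    using g_bounds_on_sublevel by blast
  have "F_val (x 0) * g_max \<ge> 0"
    using F_val_nonneg[OF iterate_dom] g_bounds[OF iterate_sublevel[of 0]] \<open>g_min > 0\<close> by simp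
  from lipschitz_on_divide[OF A B numerator_bound_on_sublevel this _ \<open>g_min > 0\<close>] g_bounds
  have "(A / g_min + F_val (x 0) * g_max * B / g_min\<^sup>2)-lipschitz_on sublevel F_val"
    unfolding F_val_def[abs_def] by blast
  with that show ?thesis by blast
qed

definition subgradient :: "nat \<Rightarrow> 'a" where
  "subgradient k = (1 / g (x (Suc k))) *\<^sub>R
     ((1 / \<alpha> k) *\<^sub>R (x k - x (Suc k)) + (grad_h (x (Suc k)) - grad_h (x k))
      + (F_val (x k) - F_val (x (Suc k))) *\<^sub>R grad_g (x (Suc k)))"

lemma subgradient_in_frechet_subdiff: "subgradient k \<in> frechet_subdiff (frac_obj f g h) (x (Suc k))"
proof -
  define C where "C = F_val (x k)"
  define y where "y = x k - \<alpha> k *\<^sub>R grad_h (x k)"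
  define v where "v = (1 / \<alpha> k) *\<^sub>R (y - x (Suc k))"
  define a where "a = real_of_ereal (f (x (Suc k)))"
  have prox: "x (Suc k) \<in> prox (\<lambda>u. ereal (\<alpha> k) * (f u - ereal (C * g u))) y"
    using iter[of k] frac_obj_dom[OF iterate_dom] by (simp add: C_def y_def)
  have fx1: "f (x (Suc k)) = ereal a" unfolding a_def by (rule f_dom[OF iterate_dom])
  have model: "a - C * g (x (Suc k)) + inner v (u - x (Suc k)) - (norm (u - x (Suc k)))\<^sup>2 / (2 * \<alpha> k)
      \<le> r - C * g u" if "f u = ereal r" for u r
    unfolding v_def by (rule prox_lower_model[where f=f, OF prox step_pos f_finite fx1 that])
  have "(1 / g (x (Suc k))) *\<^sub>R (v + grad_h (x (Suc k))
      + (C - (a + h (x (Suc k))) / g (x (Suc k))) *\<^sub>R grad_g (x (Suc k)))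
      \<in> frechet_subdiff (frac_obj f g h) (x (Suc k))"
    by (rule frechet_subdiff_frac_obj[where f=f and g=g and h=h,
          OF fx1 g_dom_pos[OF iterate_dom] f_finite h_deriv g_deriv step_pos model])
  moreover have "v + grad_h (x (Suc k)) = (1 / \<alpha> k) *\<^sub>R (x k - x (Suc k)) + (grad_h (x (Suc k)) - grad_h (x k))"
    using step_pos[of k] by (simp add: v_def y_def algebra_simps)
  moreover have "(a + h (x (Suc k))) / g (x (Suc k)) = F_val (x (Suc k))"
    by (simp add: a_def F_val_def)
  ultimately show ?thesis by (simp add: subgradient_def C_def)
qed

lemma subgradient_bound: "\<exists>b>0. \<forall>k. norm (subgradient k) \<le> b * norm (x (Suc k) - x k)"
proof -
  obtain M where M: "M-lipschitz_on sublevel F_val" by (rule F_val_lipschitz_on_sublevel)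
  obtain g_min g_max where "g_min > 0" and g_bounds: "\<And>u. u \<in> sublevel \<Longrightarrow> g_min \<le> g u \<and> g u \<le> g_max"
    using g_bounds_on_sublevel by blast
  obtain G where "G > 0" and G: "\<forall>u\<in>sublevel. norm (grad_g u) \<le> G"
    using compact_imp_bounded[OF compact_continuous_image[OF
        continuous_on_subset[OF grad_g_cont subset_UNIV] compact_sublevel]]
    by (auto simp: bounded_pos)
  define b where "b = (1 / \<alpha>_lo + \<bar>L\<bar> + M * G) / g_min"
  have "M \<ge> 0" using M by (rule lipschitz_on_nonneg)
  then have "b > 0" using step_lo \<open>G > 0\<close> \<open>g_min > 0\<close> by (simp add: b_def add_pos_nonneg)
  moreover have "norm (subgradient k) \<le> b * norm (x (Suc k) - x k)" for k
  proof -
    define d where "d = norm (x (Suc k) - x k)"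
    have "norm ((1 / \<alpha> k) *\<^sub>R (x k - x (Suc k))) \<le> 1 / \<alpha>_lo * d"
      using step[of k] step_lo by (simp add: d_def norm_minus_commute divide_right_mono frac_le)
    moreover have "norm (grad_h (x (Suc k)) - grad_h (x k)) \<le> \<bar>L\<bar> * d"
      using grad_h_lip[of "x (Suc k)" "x k"] by (simp add: d_def) (smt (verit) mult_right_mono norm_ge_zero)
    moreover have "norm ((F_val (x k) - F_val (x (Suc k))) *\<^sub>R grad_g (x (Suc k))) \<le> M * d * G"
    proof -
      have "\<bar>F_val (x k) - F_val (x (Suc k))\<bar> \<le> M * d"
        using lipschitz_onD[OF M iterate_sublevel iterate_sublevel, of k "Suc k"]
        by (simp add: d_def dist_real_def dist_norm norm_minus_commute)
      with G iterate_sublevel \<open>M \<ge> 0\<close> show ?thesis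
        by (simp add: mult_mono d_def)
    qed
    ultimately have V: "norm ((1 / \<alpha> k) *\<^sub>R (x k - x (Suc k)) + (grad_h (x (Suc k)) - grad_h (x k))
        + (F_val (x k) - F_val (x (Suc k))) *\<^sub>R grad_g (x (Suc k))) \<le> (1 / \<alpha>_lo + \<bar>L\<bar> + M * G) * d"
      by (smt (verit) norm_triangle_ineq distrib_right mult.commute mult.left_commute)
    have "g (x (Suc k)) \<ge> g_min" using g_bounds[OF iterate_sublevel] by blast
    then have "norm (subgradient k) \<le> (1 / \<alpha>_lo + \<bar>L\<bar> + M * G) * d / g (x (Suc k))"
      using V g_dom_pos[OF iterate_dom, of "Suc k"] by (simp add: subgradient_def divide_right_mono)
    also have "\<dots> \<le> (1 / \<alpha>_lo + \<bar>L\<bar> + M * G) * d / g_min"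
      using \<open>g (x (Suc k)) \<ge> g_min\<close> \<open>g_min > 0\<close> \<open>b > 0\<close> unfolding b_def
      by (intro divide_left_mono) (auto simp: d_def zero_less_divide_iff)
    finally show ?thesis by (simp add: b_def d_def)
  qed
  ultimately show ?thesis by blast
qed

end

theorem mainTheorem11:
  fixes f :: "'a::euclidean_space \<Rightarrow> ereal"
    and g h :: "'a \<Rightarrow> real"
    and grad_g grad_h :: "'a \<Rightarrow> 'a"
    and L :: real
    and x :: "nat \<Rightarrow> 'a"
    and \<alpha> :: "nat \<Rightarrow> real"
    and \<alpha>_lo \<alpha>_up :: real
  defines "\<Omega> \<equiv> {y. g y \<noteq> 0}"
    and "F \<equiv> frac_obj f g h"
  assumes f_proper: "proper_fun f"
    and f_lsc: "lsc_fun f"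
    \<comment> \<open>Assumption 1 (i)\<close>
    and A1: "loc_lipschitz_on (edom f \<inter> \<Omega>) (\<lambda>y. real_of_ereal (f y))"
    \<comment> \<open>Assumption 1 (ii)\<close>
    and g_deriv: "\<And>y. (g has_derivative (\<lambda>v. inner (grad_g y) v)) (at y)"
    and g_grad_lip: "loc_lipschitz_on UNIV grad_g"
    and g_pos: "\<And>y. y \<in> \<Omega> \<inter> edom f \<Longrightarrow> g y > 0"
    \<comment> \<open>Assumption 1 (iii)\<close>
    and h_deriv: "\<And>y. (h has_derivative (\<lambda>v. inner (grad_h y) v)) (at y)"
    and L_pos: "L > 0"
    and h_lip: "\<And>y z. norm (grad_h y - grad_h z) \<le> L * norm (y - z)"
    \<comment> \<open>Assumption 1 (iv)\<close>
    and fh_nonneg: "\<And>y. y \<in> edom f \<Longrightarrow> f y + ereal (h y) \<ge> 0"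
    and dom_ne: "\<Omega> \<inter> edom f \<noteq> {}"
    \<comment> \<open>Assumption 1 (v)\<close>
    and prox_ne: "\<And>y \<gamma>. \<gamma> \<ge> 0 \<Longrightarrow> prox (\<lambda>u. f u - ereal (\<gamma> * g u)) y \<noteq> {}"
    \<comment> \<open>Assumption 1 (vi)\<close>
    and F_lsc: "lsc_fun F"
    and F_lb: "level_bounded F"
    \<comment> \<open>PPGA\<close>
    and x0: "x 0 \<in> \<Omega> \<inter> edom f"
    and step_lo: "0 < \<alpha>_lo" and step_up: "\<alpha>_up < 1 / L"
    and step: "\<And>k. \<alpha>_lo \<le> \<alpha> k \<and> \<alpha> k \<le> \<alpha>_up"
    and iter: "\<And>k. x (Suc k) \<in> prox (\<lambda>u. ereal (\<alpha> k) * (f u - ereal (real_of_ereal (F (x k)) * g u)))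
                                    (x k - \<alpha> k *\<^sub>R grad_h (x k))"
  shows "(\<exists>a>0. \<forall>k. F (x (Suc k)) + ereal (a / 2 * (norm (x (Suc k) - x k))\<^sup>2) \<le> F (x k))
       \<and> (\<exists>b>0. \<forall>k. \<exists>w \<in> limiting_subdiff F (x (Suc k)). norm w \<le> b * norm (x (Suc k) - x k))"
proof -
  \<comment> \<open>\<open>f_lsc\<close>, \<open>dom_ne\<close> and \<open>prox_ne\<close> only guarantee that the iteration is well defined,
    and \<open>L_pos\<close> already follows from \<open>step_up\<close>.\<close>
  interpret ppga f g h grad_g grad_h L x \<alpha> \<alpha>_lo \<alpha>_up
  proof
    show "f u \<noteq> -\<infinity>" for u using f_proper by (simp add: proper_fun_def)
    show "loc_lipschitz_on (edom f \<inter> {y. g y \<noteq> 0}) (\<lambda>y. real_of_ereal (f y))"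
      using A1 by (simp add: \<Omega>_def)
    show "continuous_on UNIV grad_g" using g_grad_lip by (rule continuous_on_if_loc_lipschitz_on)
    show "g y \<noteq> 0 \<Longrightarrow> f y < \<infinity> \<Longrightarrow> g y > 0" for y using g_pos by (simp add: \<Omega>_def edom_def)
    show "f y < \<infinity> \<Longrightarrow> f y + ereal (h y) \<ge> 0" for y using fh_nonneg by (simp add: edom_def)
    show "g (x 0) \<noteq> 0" "f (x 0) < \<infinity>" using x0 by (auto simp: \<Omega>_def edom_def)
  qed (use g_deriv h_deriv h_lip F_lsc F_lb step_lo step_up step iter in \<open>simp_all add: F_def\<close>)
  show ?thesis
    using sufficient_decrease subgradient_bound subgradient_in_frechet_subdiff frechet_subdiff_subset_limiting_subdiff
    unfolding F_def by blast
qed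

end
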